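(* Let $T\in\mathcal L(\mathcal P_n)$, $T\ne 0$, and suppose there is a constant $C>0$ such that for each nonconstant $f\in\mathcal P_n$ there exist $u\in Z(f)$ and $v\in Z(Tf)$ with $|u-v|\le C$. Then $T\phi_0$ is a nonzero constant polynomial $c$, and the matrix of $T$ with respect to the basis $\{\phi_0,\dots,\phi_n\}$ is upper triangular with all diagonal entries equal to $c$; i.e. for each $m=0,\dots,n$, $T\phi_m\in\operatorname{span}\{\phi_0,\dots,\phi_m\}$ and the coefficient of $\phi_m$ in $T\phi_m$ equals $c$.
   Context: Let $n\ge 1$ be an integer and $\mathcal P_n$ the complex vector space of polynomials in one complex variable of degree at most $n$; $\mathcal L(\mathcal P_n)$ is the set of linear operators $\mathcal P_n\to\mathcal P_n$; $\phi_k(z)=z^k/k!$ for $k=0,\dots,n$. For a nonzero $f$, $Z(f)$ is the multiset of roots of $f$ (with multiplicity; empty for nonzero constants); $Z(0)=\mathbb C$. *)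

theory Defs
  imports "HOL-Computational_Algebra.Polynomial" Complex_Main
begin

definition Pn :: "nat \<Rightarrow> complex poly set" where
  "Pn n = {p. degree p \<le> n}"

text \<open>Linear operator on P_n (T is a total function; only its behaviour on P_n matters).\<close>
definition lin_op_Pn :: "nat \<Rightarrow> (complex poly \<Rightarrow> complex poly) \<Rightarrow> bool" where
  "lin_op_Pn n T \<longleftrightarrow>
     (\<forall>p\<in>Pn n. T p \<in> Pn n) \<and>
     (\<forall>p\<in>Pn n. \<forall>q\<in>Pn n. T (p + q) = T p + T q) \<and>
     (\<forall>a. \<forall>p\<in>Pn n. T (smult a p) = smult a (T p))"

definition phi :: "nat \<Rightarrow> complex poly" where
  "phi k = monom (inverse (fact k)) k"

text \<open>Underlying set of the zero multiset Z(f); Z(0) = the whole plane.\<close>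
definition Zset :: "complex poly \<Rightarrow> complex set" where
  "Zset f = (if f = 0 then UNIV else {z. poly f z = 0})"

definition phi_coord :: "complex poly \<Rightarrow> nat \<Rightarrow> complex" where
  "phi_coord p k = fact k * coeff p k"

end

(*
  Write T (phi k) = (SUM j. c j k * z^j), let e be the largest j - k with c j k \<noteq> 0, and let
  \<gamma> k = c (k + e) k be the entries on that diagonal. The test polynomial (z - a)^M / M!
  equals (SUM k \<le> M. (-a)^(M-k) / (M-k)! * phi k) and has a as its only root, so its image
  under T must vanish somewhere in the disc of radius C around a. Expanding that image at
  z = a + w gives a polynomial in a of degree at most M + e whose top coefficient
  (SUM k \<le> M. (-1)^(M-k) / (M-k)! * \<gamma> k) does not involve w; were it nonzero, the top term
  would dominate on |w| \<le> C for large real a. Hence these convolutions vanish for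
  1 \<le> M \<le> n, i.e. \<gamma> k = \<gamma> 0 / k! with \<gamma> 0 \<noteq> 0. A diagonal that is nonzero in both
  column 0 and column n stays inside the (n+1) x (n+1) matrix only if e = 0, which is
  triangularity with phi_coord (T (phi m)) m = m! * \<gamma> m = \<gamma> 0.
*)

theory Submission
  imports Defs
begin

lemma Pn_add: "p \<in> Pn n \<Longrightarrow> q \<in> Pn n \<Longrightarrow> p + q \<in> Pn n"
  by (simp add: Pn_def degree_add_le)

lemma Pn_smult: "p \<in> Pn n \<Longrightarrow> smult a p \<in> Pn n"
  by (simp add: Pn_def)

lemma Pn_sum: "(\<And>x. x \<in> A \<Longrightarrow> p x \<in> Pn n) \<Longrightarrow> sum p A \<in> Pn n"
  by (induction A rule: infinite_finite_induct) (simp_all add: Pn_add, simp_all add: Pn_def)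

lemma lin_op_Pn_in_Pn: "lin_op_Pn n T \<Longrightarrow> p \<in> Pn n \<Longrightarrow> T p \<in> Pn n"
  by (simp add: lin_op_Pn_def)

lemma lin_op_Pn_zero: "lin_op_Pn n T \<Longrightarrow> T 0 = 0"
  unfolding lin_op_Pn_def Pn_def by (metis degree_0 le0 mem_Collect_eq smult_0_left)

lemma lin_op_Pn_sum:
  assumes T: "lin_op_Pn n T" and P: "\<And>x. x \<in> A \<Longrightarrow> p x \<in> Pn n"
  shows "T (\<Sum>x\<in>A. smult (a x) (p x)) = (\<Sum>x\<in>A. smult (a x) (T (p x)))"
  using P
proof (induction A rule: infinite_finite_induct)
  case (insert x F)
  have "(\<Sum>x\<in>F. smult (a x) (p x)) \<in> Pn n" "smult (a x) (p x) \<in> Pn n"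
    using insert by (auto intro: Pn_sum Pn_smult)
  with insert T show ?case by (simp add: lin_op_Pn_def)
qed (use lin_op_Pn_zero[OF T] in auto)

lemma coeff_phi: "coeff (phi k) j = (if k = j then inverse (fact k) else 0)"
  by (simp add: phi_def)

lemma phi_in_Pn: "k \<le> n \<Longrightarrow> phi k \<in> Pn n"
  by (simp add: Pn_def phi_def order_trans[OF degree_monom_le])

lemma Pn_phi_expansion: "p \<in> Pn n \<Longrightarrow> p = (\<Sum>k\<le>n. smult (phi_coord p k) (phi k))"
proof (rule poly_eqI)
  fix j assume "p \<in> Pn n"
  then have "coeff p j = (\<Sum>k\<le>n. if k = j then coeff p j else 0)"
    by (auto simp: Pn_def coeff_eq_0)
  also have "\<dots> = coeff (\<Sum>k\<le>n. smult (phi_coord p k) (phi k)) j"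
    unfolding coeff_sum coeff_smult coeff_phi phi_coord_def by (intro sum.cong) auto
  finally show "coeff p j = coeff (\<Sum>k\<le>n. smult (phi_coord p k) (phi k)) j" .
qed

lemma lin_op_Pn_phi_nonzero:
  assumes T: "lin_op_Pn n T" and "\<exists>p\<in>Pn n. T p \<noteq> 0"
  shows "\<exists>k\<le>n. T (phi k) \<noteq> 0"
proof -
  obtain p where p: "p \<in> Pn n" "T p \<noteq> 0" using assms(2) by blast
  have "T p = (\<Sum>k\<le>n. smult (phi_coord p k) (T (phi k)))"
    by (subst Pn_phi_expansion[OF p(1)]) (auto intro: lin_op_Pn_sum[OF T] phi_in_Pn)
  with p(2) show ?thesis by (auto intro: ccontr)
qed

lemma poly_eq_sum_upto:
  fixes p :: "'a::{comm_semiring_0,semiring_1} poly"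
  shows "degree p \<le> n \<Longrightarrow> poly p z = (\<Sum>j\<le>n. coeff p j * z ^ j)"
  unfolding poly_altdef by (intro sum.mono_neutral_left) (auto simp: coeff_eq_0)

lemma poly_eq_0_if_in_Zset: "v \<in> Zset f \<Longrightarrow> poly f v = 0"
  by (cases "f = 0") (simp_all add: Zset_def)

text \<open>The phi-expansion of (z - a)^M / M!, with each phi k replaced by Q k.\<close>

definition shift_comb :: "(nat \<Rightarrow> complex poly) \<Rightarrow> nat \<Rightarrow> complex \<Rightarrow> complex poly" where
  "shift_comb Q M a = (\<Sum>k\<le>M. smult ((-a) ^ (M - k) / fact (M - k)) (Q k))"

lemma poly_shift_comb_phi: "poly (shift_comb phi M a) z = (z - a) ^ M / fact M"
proof -
  have "poly (shift_comb phi M a) z = (\<Sum>k\<le>M. (-a) ^ (M - k) / fact (M - k) * (z ^ k / fact k))"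
    by (simp add: shift_comb_def poly_sum phi_def poly_monom field_simps)
  also have "\<dots> = (\<Sum>k\<le>M. of_nat (M choose k) * z ^ k * (-a) ^ (M - k)) / fact M"
    unfolding sum_divide_distrib by (intro sum.cong refl) (simp add: binomial_fact field_simps)
  also have "\<dots> = (z - a) ^ M / fact M"
    by (simp add: binomial_ring[symmetric])
  finally show ?thesis .
qed

lemma shift_comb_phi_in_Pn: "M \<le> n \<Longrightarrow> shift_comb phi M a \<in> Pn n"
  unfolding shift_comb_def by (intro Pn_sum Pn_smult phi_in_Pn) auto

lemma Zset_shift_comb_phi: "M \<ge> 1 \<Longrightarrow> Zset (shift_comb phi M a) = {a}"
proof -
  assume "M \<ge> 1"
  moreover have "shift_comb phi M a \<noteq> 0"
    using poly_shift_comb_phi[of M a "a + 1"] by auto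
  ultimately show ?thesis by (auto simp: Zset_def poly_shift_comb_phi)
qed

lemma degree_shift_comb_phi_pos:
  assumes "M \<ge> 1"
  shows "degree (shift_comb phi M a) > 0"
proof (rule ccontr)
  assume "\<not> degree (shift_comb phi M a) > 0"
  then obtain c where "shift_comb phi M a = [:c:]"
    by (metis degree_0_id gr0I)
  then have "poly (shift_comb phi M a) a = poly (shift_comb phi M a) (a + 1)"
    by simp
  with assms show False by (simp add: poly_shift_comb_phi power_0_left)
qed

lemma lin_op_Pn_shift_comb_phi:
  "lin_op_Pn n T \<Longrightarrow> M \<le> n \<Longrightarrow> T (shift_comb phi M a) = shift_comb (\<lambda>k. T (phi k)) M a"
  unfolding shift_comb_def by (rule lin_op_Pn_sum) (auto intro: phi_in_Pn)

lemma poly_shift_comb_expansion: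
  assumes "\<forall>k\<le>M. degree (Q k) \<le> n"
  shows "poly (shift_comb Q M a) (a + w) =
    (\<Sum>k\<le>M. \<Sum>j\<le>n. \<Sum>l\<le>j. (-1) ^ (M - k) / fact (M - k) * coeff (Q k) j * of_nat (j choose l)
        * a ^ (M - k + (j - l)) * w ^ l)"
  unfolding shift_comb_def poly_sum
proof (intro sum.cong refl)
  fix k assume "k \<in> {..M}"
  with assms have "poly (Q k) (a + w) = (\<Sum>j\<le>n. coeff (Q k) j * (a + w) ^ j)"
    by (simp add: poly_eq_sum_upto)
  moreover have "(a + w) ^ j = (\<Sum>l\<le>j. of_nat (j choose l) * w ^ l * a ^ (j - l))" for j
    by (subst add.commute) (rule binomial_ring)
  ultimately have "poly (Q k) (a + w)
      = (\<Sum>j\<le>n. \<Sum>l\<le>j. coeff (Q k) j * (of_nat (j choose l) * w ^ l * a ^ (j - l)))"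
    by (simp add: sum_distrib_left)
  then show "poly (smult ((-a) ^ (M - k) / fact (M - k)) (Q k)) (a + w) =
    (\<Sum>j\<le>n. \<Sum>l\<le>j. (-1) ^ (M - k) / fact (M - k) * coeff (Q k) j * of_nat (j choose l)
        * a ^ (M - k + (j - l)) * w ^ l)"
    unfolding power_add power_minus[of a] by (simp add: sum_distrib_left mult_ac)
qed

lemma lower_degree_terms_bound:
  fixes \<alpha> :: "'i \<Rightarrow> complex" and p q :: "'i \<Rightarrow> nat"
  assumes r: "r \<ge> 1" and w: "cmod w \<le> C" and deg: "\<forall>i\<in>I. \<alpha> i \<noteq> 0 \<longrightarrow> p i \<le> N"
  shows "cmod (\<Sum>i\<in>I. if p i = N then 0 else \<alpha> i * of_real r ^ p i * w ^ q i) * r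
           \<le> (\<Sum>i\<in>I. cmod (\<alpha> i) * C ^ q i) * r ^ N"
proof -
  have C: "C \<ge> 0" using w norm_ge_zero order_trans by blast
  have "cmod (\<Sum>i\<in>I. if p i = N then 0 else \<alpha> i * of_real r ^ p i * w ^ q i) * r
      \<le> (\<Sum>i\<in>I. cmod (if p i = N then 0 else \<alpha> i * of_real r ^ p i * w ^ q i) * r)"
    unfolding sum_distrib_right[symmetric] using r by (intro mult_right_mono norm_sum) auto
  also have "\<dots> \<le> (\<Sum>i\<in>I. cmod (\<alpha> i) * C ^ q i * r ^ N)"
  proof (rule sum_mono)
    fix i assume i: "i \<in> I"
    show "cmod (if p i = N then 0 else \<alpha> i * of_real r ^ p i * w ^ q i) * r \<le> cmod (\<alpha> i) * C ^ q i * r ^ N"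
    proof (cases "p i = N \<or> \<alpha> i = 0")
      case True
      with r C show ?thesis by auto
    next
      case False
      then have "Suc (p i) \<le> N" using deg i by force
      then have "cmod (\<alpha> i) * (cmod w ^ q i * r ^ Suc (p i)) \<le> cmod (\<alpha> i) * (C ^ q i * r ^ N)"
        using r w C by (intro mult_left_mono mult_mono power_mono power_increasing) auto
      with False r show ?thesis by (simp add: norm_mult norm_power mult_ac)
    qed
  qed
  also have "\<dots> = (\<Sum>i\<in>I. cmod (\<alpha> i) * C ^ q i) * r ^ N"
    by (simp add: sum_distrib_right)
  finally show ?thesis .
qed

lemma top_degree_terms_dominate:
  fixes \<alpha> :: "'i \<Rightarrow> complex" and p q :: "'i \<Rightarrow> nat"
  assumes C: "C \<ge> 0"
    and deg: "\<forall>i\<in>I. \<alpha> i \<noteq> 0 \<longrightarrow> p i \<le> N"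
    and top: "\<forall>i\<in>I. \<alpha> i \<noteq> 0 \<longrightarrow> p i = N \<longrightarrow> q i = 0"
    and top_nonzero: "(\<Sum>i\<in>I. if p i = N then \<alpha> i else 0) \<noteq> 0"
  shows "\<exists>a. \<forall>w. cmod w \<le> C \<longrightarrow> (\<Sum>i\<in>I. \<alpha> i * a ^ p i * w ^ q i) \<noteq> 0"
proof -
  define \<kappa> where "\<kappa> = (\<Sum>i\<in>I. if p i = N then \<alpha> i else 0)"
  define K where "K = (\<Sum>i\<in>I. cmod (\<alpha> i) * C ^ q i)"
  define r where "r = K / cmod \<kappa> + 1"
  have "cmod \<kappa> > 0" using top_nonzero by (simp add: \<kappa>_def)
  moreover have "K \<ge> 0" unfolding K_def using C by (intro sum_nonneg) auto
  ultimately have r: "r \<ge> 1" "K < cmod \<kappa> * r"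
    by (auto simp: r_def field_simps)
  have "(\<Sum>i\<in>I. \<alpha> i * of_real r ^ p i * w ^ q i) \<noteq> 0" if w: "cmod w \<le> C" for w
  proof -
    define R where "R = (\<Sum>i\<in>I. if p i = N then 0 else \<alpha> i * of_real r ^ p i * w ^ q i)"
    have "(\<Sum>i\<in>I. \<alpha> i * of_real r ^ p i * w ^ q i)
        = (\<Sum>i\<in>I. (if p i = N then \<alpha> i else 0) * of_real r ^ N
                    + (if p i = N then 0 else \<alpha> i * of_real r ^ p i * w ^ q i))"
      using top by (intro sum.cong) auto
    also have "\<dots> = \<kappa> * of_real r ^ N + R"
      by (simp add: \<kappa>_def R_def sum.distrib sum_distrib_right)
    finally have split: "(\<Sum>i\<in>I. \<alpha> i * of_real r ^ p i * w ^ q i) = \<kappa> * of_real r ^ N + R" .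
    have "cmod R * r \<le> K * r ^ N"
      unfolding R_def K_def using lower_degree_terms_bound[OF r(1) w deg] .
    also have "\<dots> < cmod \<kappa> * r * r ^ N"
      using r by (intro mult_strict_right_mono) auto
    finally have "cmod R < cmod (\<kappa> * of_real r ^ N)"
      using r(1) by (simp add: norm_mult norm_power mult_ac)
    then show ?thesis
      unfolding split by (metis add_eq_0_iff norm_minus_cancel order_less_irrefl)
  qed
  then show ?thesis by blast
qed

lemma sum_nested3_eq_Sigma:
  "(\<Sum>k\<le>(M::nat). \<Sum>j\<le>(n::nat). \<Sum>l\<le>j. g k j l)
     = (\<Sum>(k, j, l)\<in>Sigma {..M} (\<lambda>k. Sigma {..n} (\<lambda>j. {..j})). g k j l)"
proof -
  have "(\<Sum>k\<le>M. \<Sum>j\<le>n. \<Sum>l\<le>j. g k j l) = (\<Sum>k\<le>M. \<Sum>(j, l)\<in>Sigma {..n} (\<lambda>j. {..j}). g k j l)"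
    by (intro sum.cong refl sum.Sigma) auto
  also have "\<dots> = (\<Sum>(k, j, l)\<in>Sigma {..M} (\<lambda>k. Sigma {..n} (\<lambda>j. {..j})). g k j l)"
    by (rule sum.Sigma) auto
  finally show ?thesis .
qed

text \<open>The entry in column k on the diagonal j - k = e of the matrix (coeff (Q k) j), j, k \<le> n;
  0 if that position lies outside the matrix.\<close>

definition diagonal_coeff :: "(nat \<Rightarrow> complex poly) \<Rightarrow> nat \<Rightarrow> int \<Rightarrow> nat \<Rightarrow> complex" where
  "diagonal_coeff Q n e k = (\<Sum>j\<le>n. if int j - int k = e then coeff (Q k) j else 0)"

lemma diagonal_coeff_eq:
  assumes "j \<le> n" "int j - int k = e"
  shows "diagonal_coeff Q n e k = coeff (Q k) j"
proof -
  have "diagonal_coeff Q n e k = (\<Sum>j'\<le>n. if j' = j then coeff (Q k) j else 0)"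
    unfolding diagonal_coeff_def using assms(2) by (intro sum.cong) auto
  with assms(1) show ?thesis by simp
qed

lemma diagonal_coeff_eq_0: "(\<And>j. j \<le> n \<Longrightarrow> int j - int k \<noteq> e) \<Longrightarrow> diagonal_coeff Q n e k = 0"
  by (simp add: diagonal_coeff_def)

lemma band_exponent_le:
  assumes "int j - int k \<le> e" "k \<le> M" "l \<le> j"
  shows "M - k + (j - l) \<le> nat (int M + e)"
    and "M - k + (j - l) = nat (int M + e) \<longleftrightarrow> l = 0 \<and> int j - int k = e"
  using assms by auto

lemma top_coeff_shift_comb_expansion:
  fixes Q :: "nat \<Rightarrow> complex poly" and e :: int
  assumes band: "\<forall>j\<le>n. \<forall>k\<le>M. coeff (Q k) j \<noteq> 0 \<longrightarrow> int j - int k \<le> e"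
  shows "(\<Sum>k\<le>M. \<Sum>j\<le>n. \<Sum>l\<le>j. if M - k + (j - l) = nat (int M + e)
            then (-1) ^ (M - k) / fact (M - k) * coeff (Q k) j * of_nat (j choose l) else 0)
       = (\<Sum>k\<le>M. (-1) ^ (M - k) / fact (M - k) * diagonal_coeff Q n e k)"
proof -
  have "(\<Sum>l\<le>j. if M - k + (j - l) = nat (int M + e)
            then (-1) ^ (M - k) / fact (M - k) * coeff (Q k) j * of_nat (j choose l) else 0)
      = (if int j - int k = e then (-1) ^ (M - k) / fact (M - k) * coeff (Q k) j else 0)"
    if kj: "k \<le> M" "j \<le> n" for k j
  proof (cases "coeff (Q k) j = 0")
    case True
    then show ?thesis by (simp add: sum.neutral)
  next
    case False
    with band kj have "int j - int k \<le> e" by blast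
    with kj band_exponent_le(2) have "(\<Sum>l\<le>j. if M - k + (j - l) = nat (int M + e)
            then (-1) ^ (M - k) / fact (M - k) * coeff (Q k) j * of_nat (j choose l) else 0)
        = (\<Sum>l\<le>j. if l = 0
            then (if int j - int k = e then (-1) ^ (M - k) / fact (M - k) * coeff (Q k) j else 0)
            else 0)"
      by (intro sum.cong) auto
    then show ?thesis by simp
  qed
  then have "(\<Sum>k\<le>M. \<Sum>j\<le>n. \<Sum>l\<le>j. if M - k + (j - l) = nat (int M + e)
            then (-1) ^ (M - k) / fact (M - k) * coeff (Q k) j * of_nat (j choose l) else 0)
      = (\<Sum>k\<le>M. \<Sum>j\<le>n. if int j - int k = e then (-1) ^ (M - k) / fact (M - k) * coeff (Q k) j else 0)"
    by simp
  also have "\<dots> = (\<Sum>k\<le>M. (-1) ^ (M - k) / fact (M - k) * diagonal_coeff Q n e k)"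
    unfolding diagonal_coeff_def sum_distrib_left by (intro sum.cong) auto
  finally show ?thesis .
qed

lemma diagonal_convolution_eq_0:
  fixes Q :: "nat \<Rightarrow> complex poly" and e :: int
  assumes deg: "\<forall>k\<le>M. degree (Q k) \<le> n"
    and band: "\<forall>j\<le>n. \<forall>k\<le>M. coeff (Q k) j \<noteq> 0 \<longrightarrow> int j - int k \<le> e"
    and near: "\<forall>a. \<exists>v. poly (shift_comb Q M a) v = 0 \<and> cmod (v - a) \<le> C"
  shows "(\<Sum>k\<le>M. (-1) ^ (M - k) / fact (M - k) * diagonal_coeff Q n e k) = 0"
proof (rule ccontr)
  assume top_nonzero: "(\<Sum>k\<le>M. (-1) ^ (M - k) / fact (M - k) * diagonal_coeff Q n e k) \<noteq> 0"
  define I where "I = Sigma {..M} (\<lambda>k. Sigma {..n} (\<lambda>j. {..j}))"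
  define \<alpha> where "\<alpha> = (\<lambda>(k, j, l). (-1) ^ (M - k) / fact (M - k) * coeff (Q k) j * of_nat (j choose l) :: complex)"
  define p where "p = (\<lambda>(k, j, l). M - k + (j - l))"
  define q where "q = (\<lambda>(k::nat, j::nat, l::nat). l)"
  define N where "N = nat (int M + e)"
  have expansion: "poly (shift_comb Q M a) (a + w) = (\<Sum>i\<in>I. \<alpha> i * a ^ p i * w ^ q i)" for a w
    unfolding poly_shift_comb_expansion[OF deg] sum_nested3_eq_Sigma I_def
    by (intro sum.cong) (auto simp: \<alpha>_def p_def q_def)
  have "p (k, j, l) \<le> N \<and> (p (k, j, l) = N \<longrightarrow> q (k, j, l) = 0)"
    if "(k, j, l) \<in> I" "\<alpha> (k, j, l) \<noteq> 0" for k j l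
  proof -
    from that have kjl: "k \<le> M" "j \<le> n" "l \<le> j" and "coeff (Q k) j \<noteq> 0"
      by (auto simp: I_def \<alpha>_def)
    with band have "int j - int k \<le> e" by blast
    from band_exponent_le[OF this kjl(1,3)] show ?thesis
      by (simp only: p_def q_def N_def prod.case) blast
  qed
  then have deg_le: "\<forall>i\<in>I. \<alpha> i \<noteq> 0 \<longrightarrow> p i \<le> N"
    and top: "\<forall>i\<in>I. \<alpha> i \<noteq> 0 \<longrightarrow> p i = N \<longrightarrow> q i = 0"
    by (metis prod_cases3)+
  have "(\<Sum>i\<in>I. if p i = N then \<alpha> i else 0)
      = (\<Sum>k\<le>M. \<Sum>j\<le>n. \<Sum>l\<le>j. if M - k + (j - l) = nat (int M + e)
            then (-1) ^ (M - k) / fact (M - k) * coeff (Q k) j * of_nat (j choose l) else 0)"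
    unfolding I_def sum_nested3_eq_Sigma by (intro sum.cong) (auto simp: \<alpha>_def p_def N_def)
  with top_nonzero top_coeff_shift_comb_expansion[OF band]
  have "(\<Sum>i\<in>I. if p i = N then \<alpha> i else 0) \<noteq> 0" by simp
  moreover obtain v0 where "cmod (v0 - 0) \<le> C" using near by blast
  then have "C \<ge> 0" using norm_ge_zero order_trans by blast
  ultimately obtain a where a: "\<forall>w. cmod w \<le> C \<longrightarrow> (\<Sum>i\<in>I. \<alpha> i * a ^ p i * w ^ q i) \<noteq> 0"
    using top_degree_terms_dominate[OF _ deg_le top] by blast
  obtain v where "poly (shift_comb Q M a) v = 0" "cmod (v - a) \<le> C"
    using near by blast
  with a expansion[of a "v - a"] show False by simp
qed

lemma sum_alternating_fact_products:
  assumes "k \<ge> 1"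
  shows "(\<Sum>i\<le>k. (-1) ^ (k - i) / (fact (k - i) * fact i) :: 'a::field_char_0) = 0"
proof -
  have "(\<Sum>i\<le>k. (-1) ^ (k - i) / (fact (k - i) * fact i) :: 'a)
      = (\<Sum>i\<le>k. of_nat (k choose i) * 1 ^ i * (-1) ^ (k - i)) / fact k"
    unfolding sum_divide_distrib by (intro sum.cong refl) (simp add: binomial_fact field_simps)
  also have "\<dots> = (1 + (-1)) ^ k / fact k"
    by (simp only: binomial_ring)
  finally show ?thesis using assms by (simp add: power_0_left)
qed

lemma eq_div_fact_if_convolution_eq_0:
  fixes \<gamma> :: "nat \<Rightarrow> 'a::field_char_0"
  assumes conv: "\<And>M. 1 \<le> M \<Longrightarrow> M \<le> n \<Longrightarrow> (\<Sum>k\<le>M. (-1) ^ (M - k) / fact (M - k) * \<gamma> k) = 0"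
    and "k \<le> n"
  shows "\<gamma> k = \<gamma> 0 / fact k"
proof -
  define \<delta> where "\<delta> i = \<gamma> i - \<gamma> 0 / fact i" for i
  have conv_\<delta>: "(\<Sum>i\<le>M. (-1) ^ (M - i) / fact (M - i) * \<delta> i) = 0" if "1 \<le> M" "M \<le> n" for M
  proof -
    have "(\<Sum>i\<le>M. (-1) ^ (M - i) / fact (M - i) * \<delta> i)
        = (\<Sum>i\<le>M. (-1) ^ (M - i) / fact (M - i) * \<gamma> i)
          - \<gamma> 0 * (\<Sum>i\<le>M. (-1) ^ (M - i) / (fact (M - i) * fact i))"
      unfolding sum_distrib_left sum_subtractf[symmetric] by (intro sum.cong) (simp_all add: \<delta>_def field_simps)
    with conv[OF that] sum_alternating_fact_products[OF that(1), where 'a='a] show ?thesis by simp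
  qed
  have "\<delta> k = 0" using assms(2)
  proof (induction k rule: less_induct)
    case (less k)
    show ?case
    proof (cases "k = 0")
      case True
      then show ?thesis by (simp add: \<delta>_def)
    next
      case False
      have "(\<Sum>i<k. (-1) ^ (k - i) / fact (k - i) * \<delta> i) = 0"
        using less by (intro sum.neutral) auto
      moreover have "{..k} = insert k {..<k}" by auto
      ultimately have "(\<Sum>i\<le>k. (-1) ^ (k - i) / fact (k - i) * \<delta> i) = \<delta> k"
        by simp
      with conv_\<delta>[of k] False less.prems show ?thesis by simp
    qed
  qed
  then show ?thesis by (simp add: \<delta>_def)
qed

lemma exists_max_band_offset:
  fixes Q :: "nat \<Rightarrow> 'a::zero poly"
  assumes "\<exists>k\<le>n. Q k \<noteq> 0" and "\<forall>k\<le>n. degree (Q k) \<le> n"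
  obtains e j0 k0 where "\<forall>j\<le>n. \<forall>k\<le>n. coeff (Q k) j \<noteq> 0 \<longrightarrow> int j - int k \<le> e"
    and "j0 \<le> n" "k0 \<le> n" "coeff (Q k0) j0 \<noteq> 0" "int j0 - int k0 = e"
proof -
  define D where "D = (\<lambda>(j, k). int j - int k) ` {(j, k). j \<le> n \<and> k \<le> n \<and> coeff (Q k) j \<noteq> 0}"
  have "finite D"
    unfolding D_def by (rule finite_imageI, rule finite_subset[of _ "{..n} \<times> {..n}"]) auto
  moreover have "D \<noteq> {}"
  proof -
    obtain k where k: "k \<le> n" "Q k \<noteq> 0" using assms(1) by blast
    with assms(2) have "(degree (Q k), k) \<in> {(j, k). j \<le> n \<and> k \<le> n \<and> coeff (Q k) j \<noteq> 0}"
      by simp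
    then show ?thesis unfolding D_def by blast
  qed
  ultimately have "Max D \<in> D" and max: "\<And>d. d \<in> D \<Longrightarrow> d \<le> Max D"
    by (auto intro: Max_in Max_ge)
  then obtain j0 k0 where "j0 \<le> n" "k0 \<le> n" "coeff (Q k0) j0 \<noteq> 0" "int j0 - int k0 = Max D"
    unfolding D_def by auto
  moreover have "\<forall>j\<le>n. \<forall>k\<le>n. coeff (Q k) j \<noteq> 0 \<longrightarrow> int j - int k \<le> Max D"
    using max unfolding D_def by auto
  ultimately show ?thesis using that by blast
qed

lemma degree_le_if_upper_triangular:
  assumes "\<forall>j\<le>n. \<forall>k\<le>n. coeff (Q k) j \<noteq> 0 \<longrightarrow> j \<le> k"
    and "\<forall>k\<le>n. degree (Q k) \<le> n" and "m \<le> n"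
  shows "degree (Q m) \<le> m"
proof (rule degree_le, intro allI impI)
  fix i assume "m < i"
  show "coeff (Q m) i = 0"
  proof (cases "i \<le> n")
    case True
    with assms(1,3) have "coeff (Q m) i \<noteq> 0 \<longrightarrow> i \<le> m" by blast
    with \<open>m < i\<close> show ?thesis by auto
  next
    case False
    with assms(2,3) have "degree (Q m) < i" by force
    then show ?thesis by (rule coeff_eq_0)
  qed
qed

lemma triangular_if_roots_near:
  fixes Q :: "nat \<Rightarrow> complex poly"
  assumes deg: "\<forall>k\<le>n. degree (Q k) \<le> n" and nonzero: "\<exists>k\<le>n. Q k \<noteq> 0"
    and near: "\<And>M a. 1 \<le> M \<Longrightarrow> M \<le> n \<Longrightarrow> \<exists>v. poly (shift_comb Q M a) v = 0 \<and> cmod (v - a) \<le> C"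
  shows "\<exists>c. c \<noteq> 0 \<and> (\<forall>m\<le>n. degree (Q m) \<le> m \<and> coeff (Q m) m = c / fact m)"
proof -
  obtain e j0 k0 where band: "\<forall>j\<le>n. \<forall>k\<le>n. coeff (Q k) j \<noteq> 0 \<longrightarrow> int j - int k \<le> e"
    and max: "j0 \<le> n" "k0 \<le> n" "coeff (Q k0) j0 \<noteq> 0" "int j0 - int k0 = e"
    using exists_max_band_offset[OF nonzero deg] by blast
  define \<gamma> where "\<gamma> = diagonal_coeff Q n e"
  have \<gamma>: "\<gamma> k = \<gamma> 0 / fact k" if "k \<le> n" for k
  proof (rule eq_div_fact_if_convolution_eq_0[OF _ that])
    fix M :: nat assume "1 \<le> M" "M \<le> n"
    with deg band near show "(\<Sum>k\<le>M. (-1) ^ (M - k) / fact (M - k) * \<gamma> k) = 0"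
      unfolding \<gamma>_def by (intro diagonal_convolution_eq_0) auto
  qed
  have "\<gamma> k0 \<noteq> 0"
    using max by (simp add: \<gamma>_def diagonal_coeff_eq)
  with \<gamma> max(2) have \<gamma>0: "\<gamma> 0 \<noteq> 0" by force
  have "e = 0" \<comment> \<open>otherwise column n or column 0 of the diagonal leaves the matrix\<close>
  proof (rule ccontr)
    assume "e \<noteq> 0"
    then have "\<gamma> n = 0 \<or> \<gamma> 0 = 0"
      unfolding \<gamma>_def by (cases "e > 0") (auto intro!: diagonal_coeff_eq_0)
    with \<gamma>[of n] \<gamma>0 show False by auto
  qed
  have "degree (Q m) \<le> m \<and> coeff (Q m) m = \<gamma> 0 / fact m" if m: "m \<le> n" for m
  proof
    have "\<forall>j\<le>n. \<forall>k\<le>n. coeff (Q k) j \<noteq> 0 \<longrightarrow> j \<le> k"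
      using band \<open>e = 0\<close> by fastforce
    then show "degree (Q m) \<le> m" using deg m by (rule degree_le_if_upper_triangular)
    show "coeff (Q m) m = \<gamma> 0 / fact m"
      using \<gamma>[OF m] m \<open>e = 0\<close> by (simp add: \<gamma>_def diagonal_coeff_eq)
  qed
  with \<gamma>0 show ?thesis by blast
qed

theorem mainTheorem9:
  fixes n :: nat and T :: "complex poly \<Rightarrow> complex poly" and C :: real
  assumes "n \<ge> 1"
    and "lin_op_Pn n T"
    and "\<exists>p\<in>Pn n. T p \<noteq> 0"
    and "C > 0"
    and "\<forall>f\<in>Pn n. degree f > 0 \<longrightarrow>
           (\<exists>u\<in>Zset f. \<exists>v\<in>Zset (T f). cmod (u - v) \<le> C)"
  shows "\<exists>c::complex. c \<noteq> 0 \<and> T (phi 0) = [:c:] \<and>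
           (\<forall>m\<le>n. degree (T (phi m)) \<le> m \<and> phi_coord (T (phi m)) m = c)"
proof -
  note T = assms(2) and roots_near = assms(5)
  have deg: "\<forall>k\<le>n. degree (T (phi k)) \<le> n"
    using lin_op_Pn_in_Pn[OF T phi_in_Pn] by (simp add: Pn_def)
  have near: "\<exists>v. poly (shift_comb (\<lambda>k. T (phi k)) M a) v = 0 \<and> cmod (v - a) \<le> C"
    if M: "1 \<le> M" "M \<le> n" for M a
  proof -
    have "\<exists>u\<in>Zset (shift_comb phi M a). \<exists>v\<in>Zset (T (shift_comb phi M a)). cmod (u - v) \<le> C"
      using roots_near shift_comb_phi_in_Pn[OF M(2)] degree_shift_comb_phi_pos[OF M(1)] by blast
    then obtain v where "v \<in> Zset (shift_comb (\<lambda>k. T (phi k)) M a)" "cmod (a - v) \<le> C"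
      unfolding Zset_shift_comb_phi[OF M(1)] lin_op_Pn_shift_comb_phi[OF T M(2)] by blast
    then show ?thesis by (metis poly_eq_0_if_in_Zset norm_minus_commute)
  qed
  obtain c where "c \<noteq> 0" and c: "\<forall>m\<le>n. degree (T (phi m)) \<le> m \<and> coeff (T (phi m)) m = c / fact m"
    using triangular_if_roots_near[OF deg lin_op_Pn_phi_nonzero[OF T assms(3)] near] by blast
  moreover have "T (phi 0) = [:c:]"
    using c[rule_format, of 0] degree_0_id[of "T (phi 0)"] by simp
  ultimately show ?thesis by (auto simp: phi_coord_def)
qed

end
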